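(* For integers $n\ge1$ and $s\ge0$, the number of binary sequences $(b_1,\dots,b_{(s+2)n+1})$ of length $(s+2)n+1$ such that for every $j\ge1$ the $j$th occurrence of the pattern $10$, if it exists, starts at an index $\ge (s+2)j+1$, and such that there are exactly $2n-1$ indices $i$ with $b_i\ne b_{i+1}$, equals \[ \frac{1}{n}\binom{(s+2)n}{2n-1} = 2\binom{(s+2)n-1}{2n-1} - s\binom{(s+2)n-1}{2n-2}. \] Moreover, no such admissible sequence has more than $2n-1$ indices $i$ with $b_i\ne b_{i+1}$.
   Context: Positions are indexed from $1$; an occurrence of $10$ is a pair of consecutive entries $b_i=1,b_{i+1}=0$, and occurrences are ordered by starting index. *)

theory Defs
  imports Complex_Main
begin

text \<open>A binary sequence (b_1,...,b_L) is a list xs of booleans of length L,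
  with b_i = xs ! (i - 1) (True = 1, False = 0), positions indexed from 1.\<close>

definition bit :: "bool list \<Rightarrow> nat \<Rightarrow> bool" where
  "bit xs i = xs ! (i - 1)"

definition occ10 :: "bool list \<Rightarrow> nat list" where
  "occ10 xs = filter (\<lambda>i. bit xs i \<and> \<not> bit xs (i + 1)) [1..<length xs]"

definition admissible :: "nat \<Rightarrow> bool list \<Rightarrow> bool" where
  "admissible s xs \<longleftrightarrow>
     (\<forall>j. 1 \<le> j \<and> j \<le> length (occ10 xs) \<longrightarrow> occ10 xs ! (j - 1) \<ge> (s + 2) * j + 1)"

definition changes :: "bool list \<Rightarrow> nat" where
  "changes xs = card {i. 1 \<le> i \<and> i < length xs \<and> bit xs i \<noteq> bit xs (i + 1)}"

end

theory Submission
  imports Defs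
begin

(*
  A binary sequence is determined by its first entry and its set C of change positions, and
  the number of occurrences of 10 before position p is (|C \<inter> [0,p)| + b\<^sub>1) div 2.  Hence
  admissibility reads (|C \<inter> [0,(s+2) j)| + b\<^sub>1) div 2 < j for 1 \<le> j \<le> n.  For j = n this gives
  |C| + b\<^sub>1 \<le> 2n-1 (the last claim), and the sequences with 2n-1 changes are exactly those with
  b\<^sub>1 = 0 whose change set is a ballot set: |C| = 2n-1 and |C \<inter> [0,(s+2) j)| < 2 j for j \<le> n.

  Ballot sets are counted with the cycle lemma: among the n rotations by multiples of B = s+2
  of a (2n-1)-subset of Z/(B n), exactly one is a ballot set, so n \<cdot> #ballot sets = (B n choose 2n-1).
  The second closed form follows from the absorption identities for binomial coefficients.
*)

(* Cycle lemma (Dvoretzky--Motzkin / Raney): if G increases by exactly 1 over each period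
   of length n, exactly one starting point r < n is strictly exceeded by all of the next n
   values.  This is what singles out one rotation in each rotation class. *)
lemma cycle_lemma:
  fixes G :: "nat \<Rightarrow> int"
  assumes per: "\<And>t. G (t + n) = G t + 1" and n: "n \<ge> 1"
  shows "\<exists>!r. r < n \<and> (\<forall>j. 1 \<le> j \<and> j \<le> n \<longrightarrow> G r < G (r + j))"
proof -
  define m where "m = Min (G ` {..<n})"
  define r where "r = Max {t. t < n \<and> G t = m}"
  have m_le: "m \<le> G t" if "t < n" for t
    unfolding m_def using that by simp
  have "m \<in> G ` {..<n}"
    unfolding m_def using n by (intro Min_in) (auto simp: lessThan_empty_iff)
  then have "{t. t < n \<and> G t = m} \<noteq> {}" by auto
  then have r: "r < n" "G r = m" and r_max: "\<And>t. t < n \<Longrightarrow> G t = m \<Longrightarrow> t \<le> r"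
    using Max_in[of "{t. t < n \<and> G t = m}"] unfolding r_def by auto
  have r_good: "G r < G (r + j)" if j: "1 \<le> j" "j \<le> n" for j
  proof (cases "r + j < n")
    case True
    with r_max have "G (r + j) \<noteq> m" using j by fastforce
    with m_le[OF True] r show ?thesis by simp
  next
    case False
    then have "r + j = (r + j - n) + n" and "r + j - n < n" using j r by arith+
    then have "G (r + j) = G (r + j - n) + 1" by (metis per)
    with m_le[OF \<open>r + j - n < n\<close>] r show ?thesis by simp
  qed
  (* two good points a < b would give G a < G b < G (a + n) = G a + 1 *)
  have no_two: False if "a < b" "b < n"
      "\<forall>j. 1 \<le> j \<and> j \<le> n \<longrightarrow> G a < G (a + j)" "\<forall>j. 1 \<le> j \<and> j \<le> n \<longrightarrow> G b < G (b + j)" for a b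
  proof -
    have "1 \<le> b - a \<and> b - a \<le> n" "1 \<le> a + n - b \<and> a + n - b \<le> n" using that(1,2) by arith+
    then have "G a < G (a + (b - a))" "G b < G (b + (a + n - b))" using that(3,4) by blast+
    moreover have "a + (b - a) = b" "b + (a + n - b) = a + n" using that(1,2) by simp_all
    ultimately show False using per[of a] by simp
  qed
  show ?thesis
  proof (rule ex1I[of _ r])
    show "r < n \<and> (\<forall>j. 1 \<le> j \<and> j \<le> n \<longrightarrow> G r < G (r + j))" using r r_good by blast
    fix r' assume "r' < n \<and> (\<forall>j. 1 \<le> j \<and> j \<le> n \<longrightarrow> G r' < G (r' + j))"
    then show "r' = r" using no_two[of r r'] no_two[of r' r] r r_good
      by (cases r r' rule: linorder_cases) auto
  qed
qed

(* In a strictly increasing list the j-th entry (0-based) exceeds c iff at most j entries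
   are \<le> c; this turns the positional condition in admissible into a counting condition. *)
lemma sorted_nth_gt_iff_card:
  fixes os :: "'a::linorder list"
  assumes sorted: "sorted_wrt (<) os" and j: "j < length os"
  shows "c < os ! j \<longleftrightarrow> card {x \<in> set os. x \<le> c} \<le> j"
proof
  assume c: "c < os ! j"
  have "{x \<in> set os. x \<le> c} \<subseteq> (!) os ` {..<j}"
  proof
    fix x assume "x \<in> {x \<in> set os. x \<le> c}"
    then obtain i where i: "i < length os" "x = os ! i" "os ! i \<le> c"
      by (auto simp: in_set_conv_nth)
    have "i < j"
    proof (rule ccontr)
      assume "\<not> i < j"
      then have "os ! j \<le> os ! i"
        using sorted_wrt_nth_less[OF sorted, of j i] i by (cases "i = j") auto
      with c i show False by simp
    qed
    then show "x \<in> (!) os ` {..<j}" using i by blast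
  qed
  then have "card {x \<in> set os. x \<le> c} \<le> card ((!) os ` {..<j})"
    by (intro card_mono) auto
  also have "\<dots> \<le> j"
    using card_image_le[of "{..<j}" "(!) os"] by simp
  finally show "card {x \<in> set os. x \<le> c} \<le> j" .
next
  assume card: "card {x \<in> set os. x \<le> c} \<le> j"
  show "c < os ! j"
  proof (rule ccontr)
    assume "\<not> c < os ! j"
    then have "(!) os ` {..j} \<subseteq> {x \<in> set os. x \<le> c}"
      using sorted j by (auto simp: strict_sorted_iff intro: order_trans sorted_nth_mono)
    moreover have "inj_on ((!) os) {..j}"
      using sorted j by (auto simp: strict_sorted_iff inj_on_def nth_eq_iff_index_eq)
    ultimately have "card ((!) os ` {..j}) \<le> card {x \<in> set os. x \<le> c}"
      by (intro card_mono) auto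
    then have "Suc j \<le> card {x \<in> set os. x \<le> c}"
      using card_image[OF \<open>inj_on ((!) os) {..j}\<close>] by simp
    with card show False by simp
  qed
qed

lemma card_by_unique_index:
  fixes n :: nat
  assumes fin: "finite T" and uniq: "\<forall>A\<in>T. \<exists>!r. r < n \<and> P r A"
  shows "card T = (\<Sum>r<n. card {A \<in> T. P r A})"
proof -
  have "T = (\<Union>r<n. {A \<in> T. P r A})" using uniq by blast
  also have "card \<dots> = (\<Sum>r<n. card {A \<in> T. P r A})"
    using fin uniq by (intro card_UN_disjoint) auto
  finally show ?thesis .
qed

lemma card_Int_lessThan_Suc:
  "card (X \<inter> {..<Suc k}) = card (X \<inter> {..<k}) + of_bool (k \<in> X)"
proof -
  have "X \<inter> {..<Suc k} = (if k \<in> X then insert k (X \<inter> {..<k}) else X \<inter> {..<k})"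
    by (auto simp: less_Suc_eq)
  then show ?thesis by simp
qed

definition per :: "nat \<Rightarrow> nat set \<Rightarrow> nat set" where
  "per M A = {i. i mod M \<in> A}"

definition rot :: "nat \<Rightarrow> nat \<Rightarrow> nat set \<Rightarrow> nat set" where
  "rot M k A = {i. i + k \<in> per M A} \<inter> {..<M}"

lemma card_shifted_prefix:
  fixes P :: "nat set"
  shows "card ({i. i + k \<in> P} \<inter> {..<m}) + card (P \<inter> {..<k}) = card (P \<inter> {..<k + m})"
proof (induction m)
  case (Suc m)
  then show ?case by (simp add: card_Int_lessThan_Suc add.commute)
qed simp

lemma per_prefix_period:
  assumes "A \<subseteq> {..<M}"
  shows "card (per M A \<inter> {..<M + k}) = card A + card (per M A \<inter> {..<k})"
proof -
  have "{i. i + M \<in> per M A} = per M A" and "per M A \<inter> {..<M} = A"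
    using assms by (auto simp: per_def)
  then show ?thesis using card_shifted_prefix[of M "per M A" k] by simp
qed

(* Rotation preserves cardinality: the window [k, k + M) is exactly one period. *)
lemma card_rot:
  assumes "A \<subseteq> {..<M}"
  shows "card (rot M k A) = card A"
  using card_shifted_prefix[of k "per M A" M] per_prefix_period[OF assms, of k]
  unfolding rot_def by (simp add: add.commute)

lemma rot_rot:
  assumes "0 < M"
  shows "rot M k (rot M l A) = rot M (k + l) A"
  using assms by (auto simp: rot_def per_def mod_add_left_eq add.assoc)

lemma rot_bij:
  assumes "0 < M" "k \<le> M"
  shows "bij_betw (rot M k) (Pow {..<M}) (Pow {..<M})"
proof (rule bij_betw_byWitness[where f' = "rot M (M - k)"])
  have "rot M M A = A" if "A \<subseteq> {..<M}" for A
    using that by (auto simp: rot_def per_def)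
  then show "\<forall>A\<in>Pow {..<M}. rot M (M - k) (rot M k A) = A"
    and "\<forall>A\<in>Pow {..<M}. rot M k (rot M (M - k) A) = A"
    using assms by (simp_all add: rot_rot)
qed (auto simp: rot_def)

definition ballot_set :: "nat \<Rightarrow> nat \<Rightarrow> nat set \<Rightarrow> bool" where
  "ballot_set B n A \<longleftrightarrow> A \<subseteq> {..<B * n} \<and> card A = 2 * n - 1 \<and>
     (\<forall>j. 1 \<le> j \<and> j \<le> n \<longrightarrow> card (A \<inter> {..<B * j}) < 2 * j)"

(* A rotation of A by B r is a ballot set iff r is a strict minimum point of this walk
   with respect to the next n steps. *)
definition excess :: "nat \<Rightarrow> nat \<Rightarrow> nat set \<Rightarrow> nat \<Rightarrow> int" where
  "excess B n A t = 2 * int t - int (card (per (B * n) A \<inter> {..<B * t}))"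

lemma excess_period:
  assumes "A \<subseteq> {..<B * n}" "card A = 2 * n - 1" "n \<ge> 1"
  shows "excess B n A (t + n) = excess B n A t + 1"
proof -
  have "B * (t + n) = B * n + B * t" by (simp add: algebra_simps)
  then show ?thesis
    using per_prefix_period[OF assms(1), of "B * t"] assms(2,3) by (simp add: excess_def)
qed

lemma ballot_rot_iff:
  assumes A: "A \<subseteq> {..<B * n}" "card A = 2 * n - 1"
  shows "ballot_set B n (rot (B * n) (B * r) A) \<longleftrightarrow>
    (\<forall>j. 1 \<le> j \<and> j \<le> n \<longrightarrow> excess B n A r < excess B n A (r + j))"
proof -
  have step: "card (rot (B * n) (B * r) A \<inter> {..<B * j}) < 2 * j
      \<longleftrightarrow> excess B n A r < excess B n A (r + j)"
    if "j \<le> n" for j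
  proof -
    have "rot (B * n) (B * r) A \<inter> {..<B * j} = {i. i + B * r \<in> per (B * n) A} \<inter> {..<B * j}"
    proof -
      have "x < B * n" if "x < B * j" for x
        using that \<open>j \<le> n\<close> by (meson less_le_trans mult_le_mono2)
      then show ?thesis by (auto simp: rot_def)
    qed
    then have "int (card (rot (B * n) (B * r) A \<inter> {..<B * j}))
        = int (card (per (B * n) A \<inter> {..<B * (r + j)})) - int (card (per (B * n) A \<inter> {..<B * r}))"
      using card_shifted_prefix[of "B * r" "per (B * n) A" "B * j"] by (simp add: distrib_left)
    then show ?thesis
      unfolding excess_def by arith
  qed
  have "card (rot (B * n) (B * r) A) = 2 * n - 1"
    using card_rot[OF A(1)] A(2) by simp
  moreover have "rot (B * n) (B * r) A \<subseteq> {..<B * n}"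
    by (auto simp: rot_def)
  ultimately show ?thesis
    unfolding ballot_set_def using step by auto
qed

lemma unique_ballot_rotation:
  assumes A: "A \<subseteq> {..<B * n}" "card A = 2 * n - 1" and n: "n \<ge> 1"
  shows "\<exists>!r. r < n \<and> ballot_set B n (rot (B * n) (B * r) A)"
  using cycle_lemma[of "excess B n A" n] excess_period[OF A n] n
  unfolding ballot_rot_iff[OF A] by blast

lemma count_ballot_sets:
  assumes B: "0 < B" and n: "n \<ge> 1"
  shows "n * card {A. ballot_set B n A} = (B * n) choose (2 * n - 1)"
proof -
  define M where "M = B * n"
  define T where "T = {A. A \<subseteq> {..<M} \<and> card A = 2 * n - 1}"
  have M: "0 < M" using B n by (simp add: M_def)
  have "M choose (2 * n - 1) = card T"
    using n_subsets[of "{..<M}" "2 * n - 1"] by (simp add: T_def)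
  also have "card T = (\<Sum>r<n. card {A \<in> T. ballot_set B n (rot M (B * r) A)})"
    using unique_ballot_rotation[OF _ _ n]
    by (intro card_by_unique_index) (auto simp: T_def M_def)
  also have "\<dots> = (\<Sum>r<n. card {A. ballot_set B n A})"
  proof (rule sum.cong[OF refl])
    fix r assume "r \<in> {..<n}"
    then have "B * r \<le> M" by (simp add: M_def)
    then have "bij_betw (rot M (B * r)) {A \<in> Pow {..<M}. ballot_set B n (rot M (B * r) A)}
        {A \<in> Pow {..<M}. ballot_set B n A}"
      by (intro bij_betw_Collect[OF rot_bij[OF M]]) auto
    moreover have "{A \<in> Pow {..<M}. ballot_set B n (rot M (B * r) A)}
        = {A \<in> T. ballot_set B n (rot M (B * r) A)}"
      by (auto simp: T_def ballot_set_def card_rot)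
    moreover have "{A \<in> Pow {..<M}. ballot_set B n A} = {A. ballot_set B n A}"
      by (auto simp: ballot_set_def M_def)
    ultimately show "card {A \<in> T. ballot_set B n (rot M (B * r) A)} = card {A. ballot_set B n A}"
      by (simp add: bij_betw_same_card)
  qed
  finally show ?thesis by (simp add: M_def)
qed

definition chgset :: "bool list \<Rightarrow> nat set" where
  "chgset xs = {i. Suc i < length xs \<and> xs ! i \<noteq> xs ! Suc i}"

definition falls :: "bool list \<Rightarrow> nat set" where
  "falls xs = {i. Suc i < length xs \<and> xs ! i \<and> \<not> xs ! Suc i}"

lemma changes_eq_card_chgset: "changes xs = card (chgset xs)"
proof -
  have "{i. 1 \<le> i \<and> i < length xs \<and> bit xs i \<noteq> bit xs (i + 1)} = Suc ` chgset xs"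
    by (auto simp: chgset_def bit_def image_iff Suc_le_eq gr0_conv_Suc)
  then show ?thesis by (simp add: changes_def card_image)
qed

lemma occ10_falls:
  "set (occ10 xs) = Suc ` falls xs" "sorted_wrt (<) (occ10 xs)" "length (occ10 xs) = card (falls xs)"
proof -
  show set: "set (occ10 xs) = Suc ` falls xs"
    by (auto simp: occ10_def falls_def bit_def image_iff Suc_le_eq gr0_conv_Suc)
  show "sorted_wrt (<) (occ10 xs)"
    by (simp add: occ10_def sorted_wrt_filter)
  have "distinct (occ10 xs)" by (simp add: occ10_def)
  then show "length (occ10 xs) = card (falls xs)"
    using distinct_card[of "occ10 xs"] by (simp add: set card_image)
qed

(* A binary sequence alternates at its changes, so the value at p is the first entry flipped
   by the parity of the changes before p; falls are every second change, starting with the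
   first one if the sequence starts with 1. *)
lemma prefix_parity:
  assumes "p < length xs"
  shows "xs ! p = (xs ! 0 \<noteq> odd (card (chgset xs \<inter> {..<p}))) \<and>
    card (falls xs \<inter> {..<p}) = (card (chgset xs \<inter> {..<p}) + of_bool (xs ! 0)) div 2"
  using assms
proof (induction p)
  case (Suc p)
  then have "p \<in> chgset xs \<longleftrightarrow> xs ! p \<noteq> xs ! Suc p" "p \<in> falls xs \<longleftrightarrow> xs ! p \<and> \<not> xs ! Suc p"
    by (auto simp: chgset_def falls_def)
  with Suc show ?case
    by (cases "xs ! 0"; cases "xs ! p"; cases "xs ! Suc p") (auto simp: card_Int_lessThan_Suc)
qed simp

lemma admissible_iff_falls:
  "admissible s xs \<longleftrightarrow>
    (\<forall>j. 1 \<le> j \<and> j \<le> card (falls xs) \<longrightarrow> card (falls xs \<inter> {..<(s + 2) * j}) < j)"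
proof -
  have "(s + 2) * j + 1 \<le> occ10 xs ! (j - 1) \<longleftrightarrow> card (falls xs \<inter> {..<(s + 2) * j}) < j"
    if j: "1 \<le> j" "j \<le> card (falls xs)" for j
  proof -
    have "{x \<in> set (occ10 xs). x \<le> (s + 2) * j} = Suc ` (falls xs \<inter> {..<(s + 2) * j})"
      by (auto simp: occ10_falls(1))
    then have "card {x \<in> set (occ10 xs). x \<le> (s + 2) * j} = card (falls xs \<inter> {..<(s + 2) * j})"
      by (simp add: card_image)
    moreover have "j - 1 < length (occ10 xs)"
      using j occ10_falls(3) by simp
    then have "(s + 2) * j < occ10 xs ! (j - 1) \<longleftrightarrow>
        card {x \<in> set (occ10 xs). x \<le> (s + 2) * j} \<le> j - 1"
      by (rule sorted_nth_gt_iff_card[OF occ10_falls(2)])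
    ultimately show ?thesis
      using j(1) by linarith
  qed
  then show ?thesis
    unfolding admissible_def occ10_falls(3) by auto
qed

(* For sequences of length (s+2) n + 1 it suffices to check j \<le> n: prefixes with j > n
   cover the whole sequence, where the condition at j = n already bounds the falls by n. *)
lemma admissible_iff_prefix_falls:
  assumes len: "length xs = (s + 2) * n + 1" and n: "n \<ge> 1"
  shows "admissible s xs \<longleftrightarrow> (\<forall>j. 1 \<le> j \<and> j \<le> n \<longrightarrow> card (falls xs \<inter> {..<(s + 2) * j}) < j)"
proof -
  let ?F = "falls xs"
  have F: "?F \<subseteq> {..<(s + 2) * n}"
    using len by (auto simp: falls_def)
  then have bound: "card (?F \<inter> {..<(s + 2) * j}) \<le> card ?F" for j
    by (intro card_mono) (auto intro: finite_subset)
  from F have full: "?F \<inter> {..<(s + 2) * n} = ?F"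
    by blast
  show ?thesis
    unfolding admissible_iff_falls
  proof safe
    fix j assume all: "\<forall>j. 1 \<le> j \<and> j \<le> card ?F \<longrightarrow> card (?F \<inter> {..<(s + 2) * j}) < j"
      and j: "1 \<le> j" "j \<le> n"
    then show "card (?F \<inter> {..<(s + 2) * j}) < j"
      using bound[of j] by (cases "j \<le> card ?F") auto
  next
    fix j assume all: "\<forall>j. 1 \<le> j \<and> j \<le> n \<longrightarrow> card (?F \<inter> {..<(s + 2) * j}) < j"
      and j: "1 \<le> j" "j \<le> card ?F"
    have "card ?F < n"
      using all n full by auto
    with all j show "card (?F \<inter> {..<(s + 2) * j}) < j"
      by auto
  qed
qed

lemma admissible_iff_prefix_changes:
  assumes len: "length xs = (s + 2) * n + 1" and n: "n \<ge> 1"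
  shows "admissible s xs \<longleftrightarrow>
    (\<forall>j. 1 \<le> j \<and> j \<le> n \<longrightarrow> (card (chgset xs \<inter> {..<(s + 2) * j}) + of_bool (xs ! 0)) div 2 < j)"
proof -
  have "(s + 2) * j < length xs" if "j \<le> n" for j
  proof -
    have "(s + 2) * j \<le> (s + 2) * n" using that by (rule mult_le_mono2)
    then show ?thesis using len by linarith
  qed
  then show ?thesis
    unfolding admissible_iff_prefix_falls[OF len n] using prefix_parity by auto
qed

lemma admissible_changes_bound:
  assumes len: "length xs = (s + 2) * n + 1" and n: "n \<ge> 1" and adm: "admissible s xs"
  shows "changes xs + of_bool (xs ! 0) \<le> 2 * n - 1"
proof -
  have "chgset xs \<inter> {..<(s + 2) * n} = chgset xs"
    using len by (auto simp: chgset_def)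
  then have "(changes xs + of_bool (xs ! 0)) div 2 < n"
    using adm n unfolding admissible_iff_prefix_changes[OF len n] changes_eq_card_chgset by auto
  then show ?thesis by linarith
qed

lemma admissible_extremal_iff:
  assumes len: "length xs = (s + 2) * n + 1" and n: "n \<ge> 1"
  shows "admissible s xs \<and> changes xs = 2 * n - 1 \<longleftrightarrow> \<not> xs ! 0 \<and> ballot_set (s + 2) n (chgset xs)"
proof
  assume "admissible s xs \<and> changes xs = 2 * n - 1"
  moreover from this have "\<not> xs ! 0"
    using admissible_changes_bound[OF len n] by fastforce
  moreover have "chgset xs \<subseteq> {..<(s + 2) * n}"
    using len by (auto simp: chgset_def)
  ultimately show "\<not> xs ! 0 \<and> ballot_set (s + 2) n (chgset xs)"
    unfolding ballot_set_def admissible_iff_prefix_changes[OF len n] changes_eq_card_chgset by auto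
next
  assume "\<not> xs ! 0 \<and> ballot_set (s + 2) n (chgset xs)"
  then show "admissible s xs \<and> changes xs = 2 * n - 1"
    unfolding ballot_set_def admissible_iff_prefix_changes[OF len n] changes_eq_card_chgset by auto
qed

lemma chgset_bij: "bij_betw chgset {xs. length xs = Suc M \<and> \<not> xs ! 0} (Pow {..<M})"
  unfolding bij_betw_def
proof (intro conjI subset_antisym)
  show "inj_on chgset {xs. length xs = Suc M \<and> \<not> xs ! 0}"
  proof (rule inj_onI)
    fix xs ys
    assume "xs \<in> {xs. length xs = Suc M \<and> \<not> xs ! 0}" "ys \<in> {xs. length xs = Suc M \<and> \<not> xs ! 0}"
      and "chgset xs = chgset ys"
    then show "xs = ys"
      using prefix_parity[of _ xs] prefix_parity[of _ ys] by (auto intro: nth_equalityI)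
  qed
  show "chgset ` {xs. length xs = Suc M \<and> \<not> xs ! 0} \<subseteq> Pow {..<M}"
    by (auto simp: chgset_def)
  show "Pow {..<M} \<subseteq> chgset ` {xs. length xs = Suc M \<and> \<not> xs ! 0}"
  proof
    fix A assume A: "A \<in> Pow {..<M}"
    define xs where "xs = map (\<lambda>k. odd (card (A \<inter> {..<k}))) [0..<Suc M]"
    have nth: "xs ! k = odd (card (A \<inter> {..<k}))" if "k \<le> M" for k
      using that unfolding xs_def by (simp del: upt_Suc add: nth_map_upt)
    have "chgset xs = A"
      using A by (auto simp: chgset_def xs_def nth card_Int_lessThan_Suc simp del: upt_Suc)
    moreover have "length xs = Suc M" "\<not> xs ! 0"
      using nth[of 0] by (simp_all add: xs_def del: upt_Suc)
    ultimately show "A \<in> chgset ` {xs. length xs = Suc M \<and> \<not> xs ! 0}"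
      by blast
  qed
qed

lemma card_extremal_sequences:
  assumes n: "n \<ge> 1"
  shows "card {xs. length xs = (s + 2) * n + 1 \<and> admissible s xs \<and> changes xs = 2 * n - 1}
    = card {A. ballot_set (s + 2) n A}"
proof -
  have "bij_betw chgset
      {xs \<in> {xs. length xs = Suc ((s + 2) * n) \<and> \<not> xs ! 0}. ballot_set (s + 2) n (chgset xs)}
      {A \<in> Pow {..<(s + 2) * n}. ballot_set (s + 2) n A}"
    by (rule bij_betw_Collect[OF chgset_bij]) simp
  moreover have "{xs \<in> {xs. length xs = Suc ((s + 2) * n) \<and> \<not> xs ! 0}. ballot_set (s + 2) n (chgset xs)}
      = {xs. length xs = (s + 2) * n + 1 \<and> admissible s xs \<and> changes xs = 2 * n - 1}"
    using admissible_extremal_iff[OF _ n] by auto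
  moreover have "{A \<in> Pow {..<(s + 2) * n}. ballot_set (s + 2) n A} = {A. ballot_set (s + 2) n A}"
    by (auto simp: ballot_set_def)
  ultimately show ?thesis
    by (simp add: bij_betw_same_card)
qed

(* With M = (s+2) n and k = 2n-1 the absorption identities
   (M-k)(M choose k) = M (M-1 choose k) and k (M choose k) = M (M-1 choose k-1) give
   M n (2 (M-1 choose k) - s (M-1 choose k-1)) = n (2 (M-k) - s k)(M choose k) = M (M choose k),
   because 2 (M-k) - s k = s + 2. *)
lemma binomial_identity:
  fixes n s :: nat
  assumes n: "n \<ge> 1"
  defines "M \<equiv> (s + 2) * n"
  shows "int (M choose (2 * n - 1))
    = int n * (2 * int ((M - 1) choose (2 * n - 1)) - int s * int ((M - 1) choose (2 * n - 2)))"
proof -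
  define k where "k = 2 * n - 1"
  have k: "k \<le> M" "Suc (2 * n - 2) = k" "int k = 2 * int n - 1"
    using n by (simp_all add: k_def M_def)
  have comp: "(M - k) * (M choose k) = M * ((M - 1) choose k)"
    by (rule binomial_absorb_comp)
  have absorb: "k * (M choose k) = M * ((M - 1) choose (2 * n - 2))"
    using binomial_absorption[of "2 * n - 2" M] k(2) by simp
  have "int M * (int n * (2 * int ((M - 1) choose k) - int s * int ((M - 1) choose (2 * n - 2))))
      = int n * (2 * ((int M - int k) * int (M choose k)) - int s * (int k * int (M choose k)))"
    using arg_cong[OF comp, of int] arg_cong[OF absorb, of int] k(1)
    by (simp add: of_nat_diff algebra_simps)
  also have "\<dots> = int M * int (M choose k)"
    unfolding k(3) by (simp add: M_def algebra_simps)
  finally have "int M * (int n * (2 * int ((M - 1) choose k) - int s * int ((M - 1) choose (2 * n - 2))))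
      = int M * int (M choose k)" .
  moreover have "M \<noteq> 0"
    using n by (simp add: M_def)
  ultimately show ?thesis
    unfolding k_def by simp
qed

theorem mainTheorem7:
  fixes n s :: nat
  assumes "n \<ge> 1"
  shows "real (card {xs. length xs = (s + 2) * n + 1 \<and> admissible s xs \<and> changes xs = 2 * n - 1})
           = (1 / real n) * real (((s + 2) * n) choose (2 * n - 1))
       \<and> int (card {xs. length xs = (s + 2) * n + 1 \<and> admissible s xs \<and> changes xs = 2 * n - 1})
           = 2 * int (((s + 2) * n - 1) choose (2 * n - 1)) - int s * int (((s + 2) * n - 1) choose (2 * n - 2))
       \<and> (\<forall>xs. length xs = (s + 2) * n + 1 \<and> admissible s xs \<longrightarrow> changes xs \<le> 2 * n - 1)"
proof (intro conjI allI impI)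
  let ?N = "card {xs. length xs = (s + 2) * n + 1 \<and> admissible s xs \<and> changes xs = 2 * n - 1}"
  let ?C = "((s + 2) * n) choose (2 * n - 1)"
  have n: "n \<ge> 1" by fact
  have count: "n * ?N = ?C"
    using count_ballot_sets[of "s + 2" n] card_extremal_sequences[OF n] n by simp
  have "real n * real ?N = real ?C"
    using arg_cong[OF count, of real] by simp
  then show "real ?N = (1 / real n) * real ?C"
    using n by (simp add: field_simps)
  have "int n * int ?N = int n * (2 * int (((s + 2) * n - 1) choose (2 * n - 1))
      - int s * int (((s + 2) * n - 1) choose (2 * n - 2)))"
    using binomial_identity[OF n, of s] arg_cong[OF count, of int] by simp
  then show "int ?N = 2 * int (((s + 2) * n - 1) choose (2 * n - 1))
      - int s * int (((s + 2) * n - 1) choose (2 * n - 2))"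
    using n by simp
next
  fix xs assume "length xs = (s + 2) * n + 1 \<and> admissible s xs"
  then show "changes xs \<le> 2 * n - 1"
    using admissible_changes_bound[of xs s n] \<open>n \<ge> 1\<close> by simp
qed

end
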